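(* For any positive integer $k$, in $\mathfrak{h}^1_t[[u]]$, $$S_t\left(\frac{1}{1-z_ku}\right)\ast\frac{1}{1+z_ku}=\frac{1}{1-\sum_{i=2}^\infty t^{i-2}(t-1)z_{ik}u^i}.$$
   Context: $t,u$ are commuting variables. $\mathfrak{h}_t=\mathbb{Q}[t]\langle x,y\rangle$ ($1$ = empty word), $\mathfrak{h}^1_t=\mathbb{Q}[t]+\mathfrak{h}_ty$, $z_k=x^{k-1}y$. For $X$ without constant term, $\frac{1}{1-X}=\sum_{n\ge0}X^n$ with concatenation powers; in particular $\frac1{1\mp z_ku}=\sum_n(\pm1)^nz_k^nu^n$. $\sigma_t$ is the algebra automorphism with $\sigma_t(x)=x,\sigma_t(y)=tx+y$ and $S_t$ is the $\mathbb{Q}[t]$-linear map with $S_t(1)=1$, $S_t(wa)=\sigma_t(w)a$ for words $w$ and letters $a$. The harmonic product $\ast$ on $\mathfrak{h}^1_t$ is the $\mathbb{Q}[t]$-bilinear product with $1\ast w=w\ast1=w$ and $z_kw_1\ast z_lw_2=z_k(w_1\ast z_lw_2)+z_l(z_kw_1\ast w_2)+z_{k+l}(w_1\ast w_2)$ for words $w_1,w_2\in\mathfrak{h}^1_t$. Everything extends coefficientwise to power series in $u$. *)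

theory Defs
  imports "HOL-Computational_Algebra.Polynomial"
begin

datatype letter = Lx | Ly

type_synonym word = "letter list"

(* Elements of h_t = Q[t]<x,y>: coefficient functions word => Q[t]
   (all elements occurring below have finite support). *)
type_synonym ht = "word \<Rightarrow> rat poly"

(* Elements of h_t[[u]]: the n-th entry is the coefficient of u^n. *)
type_synonym hts = "nat \<Rightarrow> ht"

definition tvar :: "rat poly" where "tvar = [:0, 1:]"

definition wsingle :: "word \<Rightarrow> rat poly \<Rightarrow> ht" where
  "wsingle w c = (\<lambda>v. if v = w then c else 0)"

definition zw :: "nat \<Rightarrow> word" where
  "zw k = replicate (k - 1) Lx @ [Ly]"

(* left multiplication by a letter *)
definition pre :: "letter \<Rightarrow> ht \<Rightarrow> ht" where
  "pre a f = (\<lambda>v. case v of [] \<Rightarrow> 0 | b # v' \<Rightarrow> if b = a then f v' else 0)"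

(* right multiplication by a letter *)
definition post :: "letter \<Rightarrow> ht \<Rightarrow> ht" where
  "post a f = (\<lambda>v. if v \<noteq> [] \<and> last v = a then f (butlast v) else 0)"

definition lin :: "(word \<Rightarrow> ht) \<Rightarrow> ht \<Rightarrow> ht" where
  "lin T f = (\<lambda>v. \<Sum>w\<in>{w. f w \<noteq> 0}. f w * T w v)"

definition bil :: "(word \<Rightarrow> word \<Rightarrow> ht) \<Rightarrow> ht \<Rightarrow> ht \<Rightarrow> ht" where
  "bil B f g = (\<lambda>v. \<Sum>p\<in>{p. f (fst p) \<noteq> 0 \<and> g (snd p) \<noteq> 0}.
                        f (fst p) * g (snd p) * B (fst p) (snd p) v)"

(* the algebra automorphism sigma_t on words: x \<mapsto> x, y \<mapsto> t x + y *)
fun sigma_w :: "word \<Rightarrow> ht" where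
  "sigma_w [] = wsingle [] 1"
| "sigma_w (Lx # w) = pre Lx (sigma_w w)"
| "sigma_w (Ly # w) = (\<lambda>v. tvar * pre Lx (sigma_w w) v + pre Ly (sigma_w w) v)"

definition S_w :: "word \<Rightarrow> ht" where
  "S_w w = (if w = [] then wsingle [] 1 else post (last w) (sigma_w (butlast w)))"

definition S_t :: "ht \<Rightarrow> ht" where
  "S_t f = lin S_w f"

(* Harmonic product.  A word of h^1 is z_{k1}...z_{kn}; we decode it into
   the index list [k1,...,kn], form the quasi-shuffle of index lists, and
   encode back. *)
fun dec_aux :: "nat \<Rightarrow> word \<Rightarrow> nat list" where
  "dec_aux c [] = []"
| "dec_aux c (Lx # w) = dec_aux (Suc c) w"
| "dec_aux c (Ly # w) = Suc c # dec_aux 0 w"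

definition dec :: "word \<Rightarrow> nat list" where "dec w = dec_aux 0 w"

definition in_h1 :: "word \<Rightarrow> bool" where
  "in_h1 w \<longleftrightarrow> w = [] \<or> last w = Ly"

definition npre :: "nat \<Rightarrow> (nat list \<Rightarrow> rat poly) \<Rightarrow> (nat list \<Rightarrow> rat poly)" where
  "npre k f = (\<lambda>v. case v of [] \<Rightarrow> 0 | j # v' \<Rightarrow> if j = k then f v' else 0)"

function stuffle :: "nat list \<Rightarrow> nat list \<Rightarrow> (nat list \<Rightarrow> rat poly)" where
  "stuffle [] b = (\<lambda>v. if v = b then 1 else 0)"
| "stuffle (k # a) [] = (\<lambda>v. if v = k # a then 1 else 0)"
| "stuffle (k # a) (l # b) =
     (\<lambda>v. npre k (stuffle a (l # b)) v + npre l (stuffle (k # a) b) v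
          + npre (k + l) (stuffle a b) v)"
  by pat_completeness auto
termination by (relation "measure (\<lambda>(a, b). length a + length b)") auto

definition harm_w :: "word \<Rightarrow> word \<Rightarrow> ht" where
  "harm_w w1 w2 = (\<lambda>v. if in_h1 v then stuffle (dec w1) (dec w2) (dec v) else 0)"

definition harm :: "ht \<Rightarrow> ht \<Rightarrow> ht" where
  "harm f g = bil harm_w f g"

definition conc :: "ht \<Rightarrow> ht \<Rightarrow> ht" where
  "conc f g = bil (\<lambda>w1 w2. wsingle (w1 @ w2) 1) f g"

definition S_ts :: "hts \<Rightarrow> hts" where
  "S_ts F = (\<lambda>n. S_t (F n))"

definition harm_s :: "hts \<Rightarrow> hts \<Rightarrow> hts" where
  "harm_s F G = (\<lambda>n v. \<Sum>i\<le>n. harm (F i) (G (n - i)) v)"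

definition conc_s :: "hts \<Rightarrow> hts \<Rightarrow> hts" where
  "conc_s F G = (\<lambda>n v. \<Sum>i\<le>n. conc (F i) (G (n - i)) v)"

definition one_s :: hts where
  "one_s = (\<lambda>n. if n = 0 then wsingle [] 1 else (\<lambda>v. 0))"

fun spow :: "hts \<Rightarrow> nat \<Rightarrow> hts" where
  "spow X 0 = one_s"
| "spow X (Suc m) = conc_s X (spow X m)"

(* 1/(1-X) = sum_{m>=0} X^m, for X without constant term; the coefficient
   of u^n only receives contributions from m <= n. *)
definition geom :: "hts \<Rightarrow> hts" where
  "geom X = (\<lambda>n v. \<Sum>m\<le>n. spow X m n v)"

definition zu :: "rat poly \<Rightarrow> nat \<Rightarrow> hts" where
  "zu c k = (\<lambda>n. if n = 1 then wsingle (zw k) c else (\<lambda>v. 0))"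

definition Xrhs :: "nat \<Rightarrow> hts" where
  "Xrhs k = (\<lambda>i. if i \<ge> 2 then wsingle (zw (i * k)) (tvar ^ (i - 2) * (tvar - 1))
                 else (\<lambda>v. 0))"

end

theory Submission
  imports Defs
begin

text \<open>
  For a series F write z_j^-1 F for its left quotient w |-> F (z_j w).  An element of
  h^1_t[[u]] is determined by its constant term together with all z_j^-1 F, by induction
  on the length of words.  Each of the three series in the statement obeys a residual rule
  z_j^-1 F = a_(j/k) u^(j/k) F if k divides j, and z_j^-1 F = 0 otherwise:
  S_t(1/(1 - z_k u)) with a_M = t^(M-1), because S_t(z_k w) = t x^k S_t(w) + z_k S_t(w);
  1/(1 + z_k u) with a_1 = -1 and a_M = 0 for M > 1; and 1/(1 - sum_i c_i z_(ik) u^i)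
  with a = c.  The harmonic product satisfies the Leibniz-type rule
  z_j^-1 (F * G) = z_j^-1 F * G + F * z_j^-1 G + sum_(p+q=j) z_p^-1 F * z_q^-1 G,
  so if F and G obey residual rules with coefficients a and b, then F * G obeys one with
  a_M + b_M + sum_(p+q=M) a_p b_q.  For the two factors this is
  t^(M-1) - [M = 1] - [M >= 2] t^(M-2), the coefficient of z_(Mk) u^M on the right-hand
  side.  Both sides have constant term 1, so they are equal.
\<close>

definition wsupp :: "ht \<Rightarrow> word set" where
  "wsupp f = {w. f w \<noteq> 0}"

lemma finite_words_of_length: "finite {w :: word. length w = N}"
proof -
  have "(UNIV :: letter set) = {Lx, Ly}"
    using letter.exhaust by auto
  then have "finite (UNIV :: letter set)"
    by (metis finite.emptyI finite.insertI)
  then show ?thesis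
    using finite_lists_length_eq[of "UNIV :: letter set" N] by simp
qed

lemma finite_wsupp_of_length:
  "(\<And>w. f w \<noteq> 0 \<Longrightarrow> length w = N) \<Longrightarrow> finite (wsupp f)"
  by (rule finite_subset[OF _ finite_words_of_length[of N]]) (auto simp: wsupp_def)

lemma wsupp_wsingle: "wsupp (wsingle w c) \<subseteq> {w}"
  by (auto simp: wsupp_def wsingle_def)

lemma wsingle_zero [simp]: "wsingle w 0 = (\<lambda>_. 0)"
  by (auto simp: wsingle_def)

lemma bil_eq_sum:
  assumes "finite SF" "finite SG" "wsupp f \<subseteq> SF" "wsupp g \<subseteq> SG"
  shows "bil B f g v = (\<Sum>w1\<in>SF. \<Sum>w2\<in>SG. f w1 * g w2 * B w1 w2 v)"
proof -
  have "{p. f (fst p) \<noteq> 0 \<and> g (snd p) \<noteq> 0} = wsupp f \<times> wsupp g"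
    by (auto simp: wsupp_def)
  then have "bil B f g v = (\<Sum>p\<in>wsupp f \<times> wsupp g. f (fst p) * g (snd p) * B (fst p) (snd p) v)"
    by (simp add: bil_def)
  also have "\<dots> = (\<Sum>p\<in>SF \<times> SG. f (fst p) * g (snd p) * B (fst p) (snd p) v)"
    by (rule sum.mono_neutral_left) (use assms in \<open>auto simp: wsupp_def\<close>)
  also have "\<dots> = (\<Sum>w1\<in>SF. \<Sum>w2\<in>SG. f w1 * g w2 * B w1 w2 v)"
    by (simp only: sum.cartesian_product split_def)
  finally show ?thesis .
qed

lemma bil_nonzero:
  "bil B f g v \<noteq> 0 \<Longrightarrow> \<exists>w1 w2. f w1 \<noteq> 0 \<and> g w2 \<noteq> 0 \<and> B w1 w2 v \<noteq> 0"
proof -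
  assume "bil B f g v \<noteq> 0"
  then obtain p where "f (fst p) * g (snd p) * B (fst p) (snd p) v \<noteq> 0"
    unfolding bil_def by (blast elim: sum.not_neutral_contains_not_neutral)
  then show ?thesis by auto
qed

lemma conc_nonzero: "conc f g v \<noteq> 0 \<Longrightarrow> \<exists>w1 w2. f w1 \<noteq> 0 \<and> g w2 \<noteq> 0 \<and> v = w1 @ w2"
  unfolding conc_def by (drule bil_nonzero) (auto simp: wsingle_def split: if_splits)

lemma conc_zero_left [simp]: "conc (\<lambda>_. 0) g = (\<lambda>_. 0)"
  by (auto simp: conc_def bil_def)

lemma conc_zero_right [simp]: "conc f (\<lambda>_. 0) = (\<lambda>_. 0)"
  by (auto simp: conc_def bil_def)

lemma conc_wsingle:
  assumes "finite (wsupp g)"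
  shows "conc (wsingle u c) g (u @ v) = c * g v"
    and "\<nexists>w. v = u @ w \<Longrightarrow> conc (wsingle u c) g v = 0"
proof -
  have conc_eq: "conc (wsingle u c) g v = (\<Sum>w\<in>wsupp g. c * g w * wsingle (u @ w) 1 v)" for v
    unfolding conc_def by (subst bil_eq_sum[OF _ assms wsupp_wsingle order.refl]) (simp_all add: wsingle_def)
  have "conc (wsingle u c) g (u @ v) = (\<Sum>w\<in>wsupp g. if w = v then c * g w else 0)"
    unfolding conc_eq by (intro sum.cong) (auto simp: wsingle_def)
  then show "conc (wsingle u c) g (u @ v) = c * g v"
    using assms by (simp add: wsupp_def)
  show "\<nexists>w. v = u @ w \<Longrightarrow> conc (wsingle u c) g v = 0"
    unfolding conc_eq by (intro sum.neutral) (auto simp: wsingle_def)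
qed

lemma conc_wsingle_wsingle: "conc (wsingle u a) (wsingle w b) = wsingle (u @ w) (a * b)"
proof
  fix v
  have fin: "finite (wsupp (wsingle w b))"
    using wsupp_wsingle by (rule finite_subset) simp
  show "conc (wsingle u a) (wsingle w b) v = wsingle (u @ w) (a * b) v"
  proof (cases "\<exists>v'. v = u @ v'")
    case True
    then obtain v' where "v = u @ v'" by blast
    then show ?thesis by (simp add: conc_wsingle(1)[OF fin]) (simp add: wsingle_def)
  next
    case False
    then show ?thesis using conc_wsingle(2)[OF fin] by (auto simp: wsingle_def)
  qed
qed


lemma zw_neq_Nil [simp]: "zw j \<noteq> []"
  by (simp add: zw_def)

lemma length_zw: "1 \<le> j \<Longrightarrow> length (zw j) = j"
  by (simp add: zw_def)

lemma drop_zw_append: "1 \<le> j \<Longrightarrow> drop j (zw j @ w) = w"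
  by (simp add: zw_def)

lemma zw_append_eq_iff:
  assumes "1 \<le> i" "1 \<le> j"
  shows "zw i @ w = zw j @ v \<longleftrightarrow> i = j \<and> w = v"
proof -
  have "replicate p Lx @ Ly # w = replicate q Lx @ Ly # v \<longleftrightarrow> p = q \<and> w = v" for p q
  proof (induction p arbitrary: q)
    case 0
    then show ?case by (cases q) auto
  next
    case (Suc p)
    then show ?case by (cases q) auto
  qed
  then show ?thesis
    using assms by (auto simp: zw_def)
qed

lemma in_h1_zw_append [simp]: "in_h1 (zw j @ v) \<longleftrightarrow> in_h1 v"
  by (auto simp: in_h1_def zw_def)

lemma in_h1_imp_zw_append:
  assumes "in_h1 v" "v \<noteq> []"
  obtains j v' where "1 \<le> j" "v = zw j @ v'"
proof -
  have "Ly \<in> set v"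
    using assms last_in_set unfolding in_h1_def by metis
  then obtain xs v' where v: "v = xs @ Ly # v'" and "Ly \<notin> set xs"
    by (blast dest: split_list_first)
  then have "xs = replicate (length xs) Lx"
    by (metis letter.exhaust replicate_length_same)
  then have "v = zw (Suc (length xs)) @ v'"
    by (simp add: v zw_def)
  then show ?thesis
    by (rule that[rotated]) simp
qed

lemma dec_zw_append: "1 \<le> j \<Longrightarrow> dec (zw j @ w) = j # dec w"
proof -
  have "dec_aux c (replicate p Lx @ Ly # w) = Suc (c + p) # dec_aux 0 w" for c p
    by (induction p arbitrary: c) auto
  then show "1 \<le> j \<Longrightarrow> dec (zw j @ w) = j # dec w"
    by (simp add: dec_def zw_def)
qed

lemma dec_eq_Cons:
  assumes "dec w = j # js"
  obtains w' where "1 \<le> j" "w = zw j @ w'" "dec w' = js"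
proof -
  have "dec_aux c w = j # js \<Longrightarrow> \<exists>p w'. w = replicate p Lx @ Ly # w' \<and> j = Suc (c + p) \<and> js = dec_aux 0 w'"
    for c
  proof (induction c w rule: dec_aux.induct)
    case (2 c w)
    then obtain p w' where "w = replicate p Lx @ Ly # w'" "j = Suc (Suc c + p)" "js = dec_aux 0 w'"
      by auto
    then show ?case
      by (intro exI[of _ "Suc p"] exI[of _ w']) auto
  qed auto
  then show ?thesis
    using assms that by (force simp: dec_def zw_def)
qed

lemma dec_eq_Nil: "dec w = [] \<Longrightarrow> in_h1 w \<Longrightarrow> w = []"
proof -
  have "dec_aux c w = [] \<Longrightarrow> Ly \<notin> set w" for c
    by (induction c w rule: dec_aux.induct) auto
  then show "dec w = [] \<Longrightarrow> in_h1 w \<Longrightarrow> w = []"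
    unfolding dec_def in_h1_def by (metis last_in_set)
qed

lemma dec_pos: "j \<in> set (dec w) \<Longrightarrow> 1 \<le> j"
proof -
  have "j \<in> set (dec_aux c w) \<Longrightarrow> 1 \<le> j" for c
    by (induction c w rule: dec_aux.induct) auto
  then show "j \<in> set (dec w) \<Longrightarrow> 1 \<le> j"
    unfolding dec_def by blast
qed


lemma hd_dec_eq_iff:
  "1 \<le> p \<Longrightarrow> (dec w \<noteq> [] \<and> hd (dec w) = p) \<longleftrightarrow> (\<exists>w'. w = zw p @ w')"
  using dec_zw_append by (cases "dec w") (auto elim: dec_eq_Cons)

lemma tl_dec: "1 \<le> p \<Longrightarrow> \<exists>w'. w = zw p @ w' \<Longrightarrow> tl (dec w) = dec (drop p w)"
  using dec_zw_append drop_zw_append by auto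


section \<open>The harmonic product\<close>

lemma harm_eq_sum:
  assumes "finite (wsupp F)" "finite (wsupp G)"
  shows "harm F G v = (\<Sum>w1\<in>wsupp F. F w1 * (\<Sum>w2\<in>wsupp G. G w2 * harm_w w1 w2 v))"
  unfolding harm_def bil_eq_sum[OF assms order.refl order.refl]
  by (simp add: sum_distrib_left mult.assoc)

lemma harm_outside_h1: "\<not> in_h1 v \<Longrightarrow> harm F G v = 0"
  by (simp add: harm_def bil_def harm_w_def)

lemma harm_scale_left: "harm (\<lambda>w. c * F w) G v = c * harm F G v"
proof (cases "c = 0")
  case False
  then have "{p. c * F (fst p) \<noteq> 0 \<and> G (snd p) \<noteq> 0} = {p. F (fst p) \<noteq> 0 \<and> G (snd p) \<noteq> 0}"
    by auto
  then show ?thesis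
    by (simp add: harm_def bil_def sum_distrib_left mult.assoc)
qed (simp add: harm_def bil_def)

lemma harm_scale_right: "harm F (\<lambda>w. c * G w) v = c * harm F G v"
proof (cases "c = 0")
  case False
  then have "{p. F (fst p) \<noteq> 0 \<and> c * G (snd p) \<noteq> 0} = {p. F (fst p) \<noteq> 0 \<and> G (snd p) \<noteq> 0}"
    by auto
  then show ?thesis
    by (simp add: harm_def bil_def sum_distrib_left algebra_simps)
qed (simp add: harm_def bil_def)

lemma stuffle_Nil_right: "stuffle a [] = (\<lambda>v. if v = a then 1 else 0)"
  by (cases a) auto

lemma stuffle_at_Nil: "stuffle a b [] = (if a = [] \<and> b = [] then 1 else 0)"
  by (cases a; cases b) (auto simp: npre_def)

lemma harm_Nil:
  assumes "finite (wsupp F)" "finite (wsupp G)"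
    and "\<And>w. F w \<noteq> 0 \<Longrightarrow> in_h1 w" "\<And>w. G w \<noteq> 0 \<Longrightarrow> in_h1 w"
  shows "harm F G [] = F [] * G []"
proof -
  have "harm_w w1 w2 [] = (if w1 = [] \<and> w2 = [] then 1 else 0)" if "in_h1 w1" "in_h1 w2" for w1 w2
    using that dec_eq_Nil by (auto simp: harm_w_def stuffle_at_Nil in_h1_def dec_def)
  then have "harm F G [] = (\<Sum>w1\<in>wsupp F. if w1 = [] then F w1 * (\<Sum>w2\<in>wsupp G. if w2 = [] then G w2 else 0) else 0)"
    unfolding harm_eq_sum[OF assms(1,2)] using assms(3,4)
    by (intro sum.cong refl) (auto simp: wsupp_def intro!: sum.cong)
  then show ?thesis
    using assms(1,2) by (simp add: wsupp_def)
qed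

lemma stuffle_Cons:
  assumes "\<forall>i\<in>set a. 1 \<le> i" "\<forall>i\<in>set b. 1 \<le> i"
  shows "stuffle a b (j # L) =
      (if a \<noteq> [] \<and> hd a = j then stuffle (tl a) b L else 0)
    + (if b \<noteq> [] \<and> hd b = j then stuffle a (tl b) L else 0)
    + (\<Sum>p\<in>{1..<j}. if (a \<noteq> [] \<and> hd a = p) \<and> (b \<noteq> [] \<and> hd b = j - p)
                     then stuffle (tl a) (tl b) L else 0)"
proof (cases a)
  case Nil
  then show ?thesis by (cases b) auto
next
  case (Cons k a')
  show ?thesis
  proof (cases b)
    case Nil
    then show ?thesis using Cons by (simp add: stuffle_Nil_right)
  next
    case (Cons l b')
    have "1 \<le> k" "1 \<le> l"
      using assms Cons \<open>a = k # a'\<close> by auto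
    have "(\<Sum>p\<in>{1..<j}. if (k # a' \<noteq> [] \<and> hd (k # a') = p) \<and> (l # b' \<noteq> [] \<and> hd (l # b') = j - p)
                           then stuffle (tl (k # a')) (tl (l # b')) L else 0)
        = (\<Sum>p\<in>{1..<j}. if k = p then (if l = j - k then stuffle a' b' L else 0) else 0)"
      by (intro sum.cong) auto
    also have "\<dots> = (if k \<in> {1..<j} then (if l = j - k then stuffle a' b' L else 0) else 0)"
      by (rule sum.delta'[OF finite_atLeastLessThan])
    also have "\<dots> = (if k + l = j then stuffle a' b' L else 0)"
      using \<open>1 \<le> k\<close> \<open>1 \<le> l\<close> by auto
    finally show ?thesis
      unfolding \<open>a = k # a'\<close> \<open>b = l # b'\<close> by (simp add: npre_def)
  qed
qed

lemma harm_w_zw_append: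
  assumes "1 \<le> j" "in_h1 v"
  shows "harm_w w1 w2 (zw j @ v) =
      (if \<exists>w. w1 = zw j @ w then harm_w (drop j w1) w2 v else 0)
    + (if \<exists>w. w2 = zw j @ w then harm_w w1 (drop j w2) v else 0)
    + (\<Sum>p\<in>{1..<j}. if (\<exists>w. w1 = zw p @ w) \<and> (\<exists>w. w2 = zw (j - p) @ w)
                     then harm_w (drop p w1) (drop (j - p) w2) v else 0)"
proof -
  have pos: "\<forall>i\<in>set (dec w1). 1 \<le> i" "\<forall>i\<in>set (dec w2). 1 \<le> i"
    using dec_pos by auto
  have harm_w_v: "harm_w u1 u2 v = stuffle (dec u1) (dec u2) (dec v)" for u1 u2
    using assms by (simp add: harm_w_def)
  have first: "(if dec w1 \<noteq> [] \<and> hd (dec w1) = j then stuffle (tl (dec w1)) (dec w2) (dec v) else 0)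
    = (if \<exists>w. w1 = zw j @ w then harm_w (drop j w1) w2 v else 0)"
    unfolding hd_dec_eq_iff[OF assms(1)] harm_w_v
    by (rule if_cong[OF refl]) (simp_all only: tl_dec[OF assms(1)])
  have second: "(if dec w2 \<noteq> [] \<and> hd (dec w2) = j then stuffle (dec w1) (tl (dec w2)) (dec v) else 0)
    = (if \<exists>w. w2 = zw j @ w then harm_w w1 (drop j w2) v else 0)"
    unfolding hd_dec_eq_iff[OF assms(1)] harm_w_v
    by (rule if_cong[OF refl]) (simp_all only: tl_dec[OF assms(1)])
  have third: "(if (dec w1 \<noteq> [] \<and> hd (dec w1) = p) \<and> (dec w2 \<noteq> [] \<and> hd (dec w2) = j - p)
                then stuffle (tl (dec w1)) (tl (dec w2)) (dec v) else 0)
    = (if (\<exists>w. w1 = zw p @ w) \<and> (\<exists>w. w2 = zw (j - p) @ w)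
       then harm_w (drop p w1) (drop (j - p) w2) v else 0)"
    if "p \<in> {1..<j}" for p
  proof -
    have p: "1 \<le> p" "1 \<le> j - p"
      using that by auto
    show ?thesis
      unfolding hd_dec_eq_iff[OF p(1)] hd_dec_eq_iff[OF p(2)] harm_w_v
      by (rule if_cong[OF refl]) (simp_all only: tl_dec[OF p(1)] tl_dec[OF p(2)])
  qed
  have "harm_w w1 w2 (zw j @ v) = stuffle (dec w1) (dec w2) (j # dec v)"
    using assms by (simp add: harm_w_def dec_zw_append)
  also have "\<dots> = (if \<exists>w. w1 = zw j @ w then harm_w (drop j w1) w2 v else 0)
    + (if \<exists>w. w2 = zw j @ w then harm_w w1 (drop j w2) v else 0)
    + (\<Sum>p\<in>{1..<j}. if (\<exists>w. w1 = zw p @ w) \<and> (\<exists>w. w2 = zw (j - p) @ w)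
                     then harm_w (drop p w1) (drop (j - p) w2) v else 0)"
    unfolding stuffle_Cons[OF pos] first second
    by (intro arg_cong2[where f = "(+)"] sum.cong refl third)
  finally show ?thesis .
qed

definition lquot :: "word \<Rightarrow> ht \<Rightarrow> ht" where
  "lquot u F = (\<lambda>w. F (u @ w))"

lemma lquot_Nil [simp]: "lquot [] F = F"
  by (simp add: lquot_def)

lemma finite_wsupp_lquot: "finite (wsupp F) \<Longrightarrow> finite (wsupp (lquot u F))"
proof -
  have "wsupp (lquot u F) = (\<lambda>w. u @ w) -` wsupp F"
    by (auto simp: wsupp_def lquot_def)
  then show "finite (wsupp F) \<Longrightarrow> finite (wsupp (lquot u F))"
    by (simp add: finite_vimageI inj_def)
qed

lemma sum_wsupp_lquot:
  assumes "finite (wsupp F)"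
  shows "(\<Sum>w\<in>wsupp F. if \<exists>w'. w = u @ w' then F w * \<phi> (drop (length u) w) else 0)
       = (\<Sum>w\<in>wsupp (lquot u F). lquot u F w * \<phi> w)"
proof -
  have "(\<Sum>w\<in>wsupp F. if \<exists>w'. w = u @ w' then F w * \<phi> (drop (length u) w) else 0)
      = (\<Sum>w\<in>{w\<in>wsupp F. \<exists>w'. w = u @ w'}. F w * \<phi> (drop (length u) w))"
    using assms by (simp add: sum.inter_filter)
  also have "{w\<in>wsupp F. \<exists>w'. w = u @ w'} = (\<lambda>w. u @ w) ` wsupp (lquot u F)"
    by (auto simp: wsupp_def lquot_def)
  also have "(\<Sum>w\<in>(\<lambda>w. u @ w) ` wsupp (lquot u F). F w * \<phi> (drop (length u) w))
      = (\<Sum>w\<in>wsupp (lquot u F). lquot u F w * \<phi> w)"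
    by (subst sum.reindex) (auto simp: inj_on_def lquot_def)
  finally show ?thesis .
qed

lemma harm_lquot_eq_sum:
  assumes "finite (wsupp F)" "finite (wsupp G)"
  shows "harm (lquot u1 F) (lquot u2 G) v =
    (\<Sum>w1\<in>wsupp F. \<Sum>w2\<in>wsupp G. F w1 * G w2 * (if (\<exists>w. w1 = u1 @ w) \<and> (\<exists>w. w2 = u2 @ w)
       then harm_w (drop (length u1) w1) (drop (length u2) w2) v else 0))"
proof -
  have "harm (lquot u1 F) (lquot u2 G) v
      = (\<Sum>w1\<in>wsupp (lquot u1 F). lquot u1 F w1 *
          (\<Sum>w2\<in>wsupp (lquot u2 G). lquot u2 G w2 * harm_w w1 w2 v))"
    using assms by (intro harm_eq_sum finite_wsupp_lquot)
  also have "\<dots> = (\<Sum>w1\<in>wsupp (lquot u1 F). lquot u1 F w1 *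
          (\<Sum>w2\<in>wsupp G. if \<exists>w. w2 = u2 @ w then G w2 * harm_w w1 (drop (length u2) w2) v else 0))"
    using sum_wsupp_lquot[OF assms(2), of u2 "\<lambda>w2. harm_w w1 w2 v" for w1] by simp
  also have "\<dots> = (\<Sum>w1\<in>wsupp F. if \<exists>w. w1 = u1 @ w then F w1 *
          (\<Sum>w2\<in>wsupp G. if \<exists>w. w2 = u2 @ w
              then G w2 * harm_w (drop (length u1) w1) (drop (length u2) w2) v else 0) else 0)"
    using sum_wsupp_lquot[OF assms(1), of u1 "\<lambda>w1. \<Sum>w2\<in>wsupp G. if \<exists>w. w2 = u2 @ w
      then G w2 * harm_w w1 (drop (length u2) w2) v else 0"] by simp
  finally show ?thesis
    by (auto simp: sum_distrib_left mult.assoc intro!: sum.cong)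
qed

lemma harm_zw_append:
  assumes fin: "finite (wsupp F)" "finite (wsupp G)" and "1 \<le> j"
  shows "harm F G (zw j @ v) = harm (lquot (zw j) F) G v + harm F (lquot (zw j) G) v
    + (\<Sum>p\<in>{1..<j}. harm (lquot (zw p) F) (lquot (zw (j - p)) G) v)"
proof (cases "in_h1 v")
  case False
  then show ?thesis by (simp add: harm_outside_h1)
next
  case True
  let ?SF = "wsupp F" and ?SG = "wsupp G"
  define X1 where "X1 w1 w2 = F w1 * G w2 *
    (if \<exists>w. w1 = zw j @ w then harm_w (drop j w1) w2 v else 0)" for w1 w2
  define X2 where "X2 w1 w2 = F w1 * G w2 *
    (if \<exists>w. w2 = zw j @ w then harm_w w1 (drop j w2) v else 0)" for w1 w2
  define X3 where "X3 p w1 w2 = F w1 * G w2 *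
    (if (\<exists>w. w1 = zw p @ w) \<and> (\<exists>w. w2 = zw (j - p) @ w)
     then harm_w (drop p w1) (drop (j - p) w2) v else 0)" for p w1 w2
  have "F w1 * G w2 * harm_w w1 w2 (zw j @ v) = X1 w1 w2 + X2 w1 w2 + (\<Sum>p\<in>{1..<j}. X3 p w1 w2)"
    for w1 w2
    unfolding harm_w_zw_append[OF assms(3) True] X1_def X2_def X3_def
    by (simp add: distrib_left sum_distrib_left)
  moreover have "(\<Sum>w1\<in>?SF. \<Sum>w2\<in>?SG. \<Sum>p\<in>{1..<j}. X3 p w1 w2)
      = (\<Sum>p\<in>{1..<j}. \<Sum>w1\<in>?SF. \<Sum>w2\<in>?SG. X3 p w1 w2)"
    by (subst sum.swap) (rule sum.cong[OF refl sum.swap])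
  ultimately have "harm F G (zw j @ v)
      = (\<Sum>w1\<in>?SF. \<Sum>w2\<in>?SG. X1 w1 w2) + (\<Sum>w1\<in>?SF. \<Sum>w2\<in>?SG. X2 w1 w2)
      + (\<Sum>p\<in>{1..<j}. \<Sum>w1\<in>?SF. \<Sum>w2\<in>?SG. X3 p w1 w2)"
    unfolding harm_def bil_eq_sum[OF fin order.refl order.refl]
    by (simp add: sum.distrib)
  moreover have "(\<Sum>w1\<in>?SF. \<Sum>w2\<in>?SG. X1 w1 w2) = harm (lquot (zw j) F) G v"
    using harm_lquot_eq_sum[OF fin, of "zw j" "[]", unfolded length_zw[OF assms(3)] list.size(3) drop_0]
    by (simp add: X1_def)
  moreover have "(\<Sum>w1\<in>?SF. \<Sum>w2\<in>?SG. X2 w1 w2) = harm F (lquot (zw j) G) v"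
    using harm_lquot_eq_sum[OF fin, of "[]" "zw j", unfolded length_zw[OF assms(3)] list.size(3) drop_0]
    by (simp add: X2_def)
  moreover have "(\<Sum>w1\<in>?SF. \<Sum>w2\<in>?SG. X3 p w1 w2) = harm (lquot (zw p) F) (lquot (zw (j - p)) G) v"
    if "p \<in> {1..<j}" for p
  proof -
    have p: "1 \<le> p" "1 \<le> j - p"
      using that by auto
    show ?thesis
      using harm_lquot_eq_sum[OF fin, of "zw p" "zw (j - p)", unfolded length_zw[OF p(1)] length_zw[OF p(2)]]
      by (simp add: X3_def)
  qed
  ultimately show ?thesis
    by simp
qed


section \<open>Residual rules for series\<close>

definition h1_series :: "hts \<Rightarrow> bool" where
  "h1_series F \<longleftrightarrow> (\<forall>n. finite (wsupp (F n)) \<and> (\<forall>w. F n w \<noteq> 0 \<longrightarrow> in_h1 w))"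

definition residual_rule :: "nat \<Rightarrow> (nat \<Rightarrow> rat poly) \<Rightarrow> hts \<Rightarrow> bool" where
  "residual_rule k a F \<longleftrightarrow> (\<forall>j n v. 1 \<le> j \<longrightarrow>
     F n (zw j @ v) = (if k dvd j \<and> j div k \<le> n then a (j div k) * F (n - j div k) v else 0))"

lemma h1_seriesD:
  assumes "h1_series F"
  shows "finite (wsupp (F n))" "F n w \<noteq> 0 \<Longrightarrow> in_h1 w"
  using assms by (auto simp: h1_series_def)

lemma residual_ruleD:
  assumes "residual_rule k a F" "1 \<le> j"
  shows "F n (zw j @ v) = (if k dvd j \<and> j div k \<le> n then a (j div k) * F (n - j div k) v else 0)"
  using assms by (simp add: residual_rule_def)

lemma lquot_residual_rule:
  assumes "residual_rule k a F" "1 \<le> j"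
  shows "lquot (zw j) (F n) = (\<lambda>v. (if k dvd j \<and> j div k \<le> n then a (j div k) else 0) * F (n - j div k) v)"
  using residual_ruleD[OF assms] by (auto simp: lquot_def)

lemma residual_rule_cong:
  assumes "residual_rule k a F" "\<And>M. 1 \<le> M \<Longrightarrow> a M = b M"
  shows "residual_rule k b F"
proof -
  have "a (j div k) = b (j div k)" if "1 \<le> j" "k dvd j" for j
    using that assms(2)[of "j div k"] by (cases "j div k") auto
  then show ?thesis
    using assms(1) by (auto simp: residual_rule_def)
qed

lemma residual_rule_unique:
  assumes "\<And>n v. F n v \<noteq> 0 \<Longrightarrow> in_h1 v" "\<And>n v. G n v \<noteq> 0 \<Longrightarrow> in_h1 v"
    and "\<And>n. F n [] = G n []" and "residual_rule k a F" "residual_rule k a G"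
  shows "F = G"
proof (intro ext)
  fix n v
  show "F n v = G n v"
  proof (induction v arbitrary: n rule: length_induct)
    case (1 v)
    consider "v = []" | "\<not> in_h1 v" | "in_h1 v" "v \<noteq> []"
      by blast
    then show ?case
    proof cases
      case 1
      then show ?thesis using assms(3) by simp
    next
      case 2
      then show ?thesis using assms(1,2) by metis
    next
      case 3
      then obtain j v' where "1 \<le> j" "v = zw j @ v'"
        using in_h1_imp_zw_append by blast
      moreover have "F m v' = G m v'" for m
        using "1.IH" \<open>v = zw j @ v'\<close> by simp
      ultimately show ?thesis
        using residual_ruleD[OF assms(4)] residual_ruleD[OF assms(5)] by simp
    qed
  qed
qed

lemma harm_s_outside_h1: "\<not> in_h1 v \<Longrightarrow> harm_s F G n v = 0"
  by (simp add: harm_s_def harm_outside_h1)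

lemma harm_s_Nil:
  assumes "h1_series F" "h1_series G"
    and "\<And>n. F n [] = (if n = 0 then 1 else 0)" "\<And>n. G n [] = (if n = 0 then 1 else 0)"
  shows "harm_s F G n [] = (if n = 0 then 1 else 0)"
proof -
  have "harm_s F G n [] = (\<Sum>i\<le>n. F i [] * G (n - i) [])"
    unfolding harm_s_def using assms(1,2)
    by (intro sum.cong refl harm_Nil) (auto dest: h1_seriesD)
  also have "\<dots> = (\<Sum>i\<le>n. if i = 0 then G n [] else 0)"
    using assms(3) by (intro sum.cong) auto
  finally show ?thesis
    using assms(4) by simp
qed

lemma harm_s_shift:
  assumes "q \<le> M"
  shows "(\<Sum>i\<le>n. if q \<le> i \<and> M - q \<le> n - i then harm (F (i - q)) (G (n - i - (M - q))) v else 0)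
     = (if M \<le> n then harm_s F G (n - M) v else 0)"
proof (cases "M \<le> n")
  case True
  have "(\<Sum>i\<le>n. if q \<le> i \<and> M - q \<le> n - i then harm (F (i - q)) (G (n - i - (M - q))) v else 0)
      = (\<Sum>i\<in>{q..n - (M - q)}. harm (F (i - q)) (G (n - i - (M - q))) v)"
    using True assms by (subst sum.inter_filter[symmetric]) (auto intro!: sum.cong)
  also have "\<dots> = (\<Sum>i\<in>{0..n - M}. harm (F (i + q - q)) (G (n - (i + q) - (M - q))) v)"
    using True assms sum.shift_bounds_cl_nat_ivl[of "\<lambda>i. harm (F (i - q)) (G (n - i - (M - q))) v" 0 q "n - M"]
    by (simp add: add.commute)
  also have "\<dots> = harm_s F G (n - M) v"
    unfolding harm_s_def atLeast0AtMost using assms by (intro sum.cong refl) (simp add: algebra_simps)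
  finally show ?thesis
    using True by simp
qed (use assms in \<open>auto intro!: sum.neutral\<close>)

lemma sum_dvd_reindex:
  fixes k M :: nat
  assumes "1 \<le> k"
  shows "(\<Sum>p\<in>{1..<M * k}. if k dvd p then f p else 0) = (\<Sum>q\<in>{1..<M}. f (q * k))"
proof -
  have "{p\<in>{1..<M * k}. k dvd p} = (\<lambda>q. q * k) ` {1..<M}"
  proof (intro equalityI subsetI)
    fix p assume "p \<in> {p\<in>{1..<M * k}. k dvd p}"
    then obtain q where q: "p = q * k" "1 \<le> p" "p < M * k"
      by (auto elim!: dvdE simp: mult.commute)
    have "q < M"
      using q(1,3) by (simp add: mult_less_cancel2)
    moreover have "1 \<le> q"
      using q(1,2) by (cases q) auto
    ultimately have "q \<in> {1..<M}"
      by simp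
    then show "p \<in> (\<lambda>q. q * k) ` {1..<M}"
      using q(1) by blast
  qed (use assms in auto)
  then have "(\<Sum>p\<in>{1..<M * k}. if k dvd p then f p else 0) = sum f ((\<lambda>q. q * k) ` {1..<M})"
    by (simp add: sum.inter_filter[symmetric])
  also have "\<dots> = (\<Sum>q\<in>{1..<M}. f (q * k))"
    using assms by (simp add: sum.reindex inj_on_def)
  finally show ?thesis .
qed

context
  fixes k :: nat and a b :: "nat \<Rightarrow> rat poly" and F G :: hts
  assumes k: "1 \<le> k"
    and F: "h1_series F" "residual_rule k a F"
    and G: "h1_series G" "residual_rule k b G"
begin

lemma harm_lquot_residual_rule:
  assumes "1 \<le> p" "1 \<le> q"
  shows "harm (lquot (zw p) (F i)) (G m) v
           = (if k dvd p \<and> p div k \<le> i then a (p div k) else 0) * harm (F (i - p div k)) (G m) v"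
    and "harm (F i) (lquot (zw q) (G m)) v
           = (if k dvd q \<and> q div k \<le> m then b (q div k) else 0) * harm (F i) (G (m - q div k)) v"
    and "harm (lquot (zw p) (F i)) (lquot (zw q) (G m)) v
           = (if k dvd p \<and> p div k \<le> i then a (p div k) else 0)
           * (if k dvd q \<and> q div k \<le> m then b (q div k) else 0)
           * harm (F (i - p div k)) (G (m - q div k)) v"
  unfolding lquot_residual_rule[OF F(2) assms(1)] lquot_residual_rule[OF G(2) assms(2)]
    harm_scale_left harm_scale_right
  by (simp_all only: mult.assoc)

lemma harm_zw_append_nondvd:
  assumes "1 \<le> j" "\<not> k dvd j"
  shows "harm (F i) (G m) (zw j @ v) = 0"
proof -
  have "\<not> (k dvd p \<and> k dvd (j - p))" if "p < j" for p
    using assms(2) that by (metis dvd_add le_add_diff_inverse less_or_eq_imp_le)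
  then have "harm (lquot (zw p) (F i)) (lquot (zw (j - p)) (G m)) v = 0" if "p \<in> {1..<j}" for p
    using that by (auto simp: harm_lquot_residual_rule(3))
  then show ?thesis
    using assms harm_zw_append[OF h1_seriesD(1)[OF F(1)] h1_seriesD(1)[OF G(1)] assms(1)]
    by (simp add: harm_lquot_residual_rule)
qed

lemma harm_zw_mult_append:
  assumes "1 \<le> M"
  shows "harm (F i) (G m) (zw (M * k) @ v) =
      (if M \<le> i then a M * harm (F (i - M)) (G m) v else 0)
    + (if M \<le> m then b M * harm (F i) (G (m - M)) v else 0)
    + (\<Sum>q\<in>{1..<M}. if q \<le> i \<and> M - q \<le> m
         then a q * b (M - q) * harm (F (i - q)) (G (m - (M - q))) v else 0)"
proof -
  have Mk: "1 \<le> M * k"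
    using assms k by simp
  have "(\<Sum>p\<in>{1..<M * k}. harm (lquot (zw p) (F i)) (lquot (zw (M * k - p)) (G m)) v)
      = (\<Sum>p\<in>{1..<M * k}. if k dvd p then
           (if p div k \<le> i then a (p div k) else 0)
         * (if k dvd (M * k - p) \<and> (M * k - p) div k \<le> m then b ((M * k - p) div k) else 0)
         * harm (F (i - p div k)) (G (m - (M * k - p) div k)) v else 0)"
  proof (intro sum.cong refl)
    fix p assume "p \<in> {1..<M * k}"
    then have "1 \<le> p" "1 \<le> M * k - p"
      by auto
    then show "harm (lquot (zw p) (F i)) (lquot (zw (M * k - p)) (G m)) v = (if k dvd p then
           (if p div k \<le> i then a (p div k) else 0)
         * (if k dvd (M * k - p) \<and> (M * k - p) div k \<le> m then b ((M * k - p) div k) else 0)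
         * harm (F (i - p div k)) (G (m - (M * k - p) div k)) v else 0)"
      by (simp add: harm_lquot_residual_rule(3))
  qed
  also have "\<dots> = (\<Sum>q\<in>{1..<M}. if q \<le> i \<and> M - q \<le> m
         then a q * b (M - q) * harm (F (i - q)) (G (m - (M - q))) v else 0)"
    unfolding sum_dvd_reindex[OF k] using k
    by (intro sum.cong refl) (simp add: diff_mult_distrib[symmetric])
  finally show ?thesis
    using k harm_zw_append[OF h1_seriesD(1)[OF F(1)] h1_seriesD(1)[OF G(1)] Mk]
    by (simp add: harm_lquot_residual_rule(1,2)[OF Mk Mk])
qed

lemma harm_s_zw_mult_append:
  assumes "1 \<le> M"
  shows "harm_s F G n (zw (M * k) @ v) = (if M \<le> n
    then (a M + b M + (\<Sum>q\<in>{1..<M}. a q * b (M - q))) * harm_s F G (n - M) v else 0)"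
proof -
  define S where "S q = (\<Sum>i\<le>n. if q \<le> i \<and> M - q \<le> n - i
    then harm (F (i - q)) (G (n - i - (M - q))) v else 0)" for q
  have S: "S q = (if M \<le> n then harm_s F G (n - M) v else 0)" if "q \<le> M" for q
    unfolding S_def using that by (rule harm_s_shift)
  have "harm_s F G n (zw (M * k) @ v) = a M * S M + b M * S 0 + (\<Sum>q\<in>{1..<M}. a q * b (M - q) * S q)"
    unfolding harm_s_def harm_zw_mult_append[OF assms] sum.distrib sum_distrib_left S_def
    by (subst (2) sum.swap) (simp add: if_distrib[of "(*) _"] cong: if_cong)
  also have "\<dots> = (a M + b M + (\<Sum>q\<in>{1..<M}. a q * b (M - q))) * S M"
    using S by (simp add: algebra_simps sum_distrib_left sum_distrib_right)
  finally show ?thesis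
    using S by simp
qed

lemma residual_rule_harm_s:
  "residual_rule k (\<lambda>M. a M + b M + (\<Sum>q\<in>{1..<M}. a q * b (M - q))) (harm_s F G)"
  unfolding residual_rule_def
proof (intro allI impI)
  fix j n :: nat and v :: word
  assume j: "1 \<le> j"
  show "harm_s F G n (zw j @ v) = (if k dvd j \<and> j div k \<le> n
    then (a (j div k) + b (j div k) + (\<Sum>q\<in>{1..<j div k}. a q * b (j div k - q)))
       * harm_s F G (n - j div k) v else 0)"
  proof (cases "k dvd j")
    case True
    then obtain M where "j = M * k"
      by (metis dvdE mult.commute)
    moreover have "1 \<le> M" "j div k = M"
      using j \<open>j = M * k\<close> k by (cases M, auto)+
    ultimately show ?thesis
      using harm_s_zw_mult_append by simp
  qed (use j in \<open>simp add: harm_s_def harm_zw_append_nondvd\<close>)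
qed

end


section \<open>Geometric series in the \<open>z\<^sub>i\<^sub>k\<close>\<close>

definition zseries :: "nat \<Rightarrow> (nat \<Rightarrow> rat poly) \<Rightarrow> hts" where
  "zseries k c = (\<lambda>i. wsingle (zw (i * k)) (c i))"

lemma zu_eq_zseries: "zu c k = zseries k (\<lambda>i. if i = 1 then c else 0)"
  by (auto simp: zu_def zseries_def)

lemma Xrhs_eq_zseries: "Xrhs k = zseries k (\<lambda>i. if 2 \<le> i then tvar ^ (i - 2) * (tvar - 1) else 0)"
  by (auto simp: Xrhs_def zseries_def)

lemma sum_mult_delta:
  fixes k j n :: nat
  assumes "1 \<le> k"
  shows "(\<Sum>i\<le>n. if i * k = j then f i else 0) = (if k dvd j \<and> j div k \<le> n then f (j div k) else 0)"
proof (cases "k dvd j")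
  case True
  then have "i * k = j \<longleftrightarrow> i = j div k" for i
    using assms by auto
  then show ?thesis
    using True by (simp add: sum.delta)
next
  case False
  then have "i * k \<noteq> j" for i
    by auto
  then show ?thesis
    using False by simp
qed

context
  fixes k :: nat and c :: "nat \<Rightarrow> rat poly"
  assumes k: "1 \<le> k" and c0: "c 0 = 0"
begin

lemma zseries_0 [simp]: "zseries k c 0 = (\<lambda>_. 0)"
  by (simp add: zseries_def c0)

lemma conc_zseries_zw_append:
  assumes "finite (wsupp G)" "1 \<le> j"
  shows "conc (zseries k c i) G (zw j @ v) = (if i * k = j then c i * G v else 0)"
proof (cases "i = 0")
  case False
  then have "1 \<le> i * k"
    using k by simp
  show ?thesis
  proof (cases "i * k = j")
    case True
    then show ?thesis
      using conc_wsingle(1)[OF assms(1)] by (simp add: zseries_def)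
  next
    case False
    then have "\<nexists>w. zw j @ v = zw (i * k) @ w"
      using zw_append_eq_iff[OF \<open>1 \<le> i * k\<close> assms(2)] by metis
    then show ?thesis
      using False conc_wsingle(2)[OF assms(1)] by (simp add: zseries_def)
  qed
qed (use assms in simp)

lemma spow_zseries_nonzero:
  "spow (zseries k c) m n v \<noteq> 0 \<Longrightarrow> length v = n * k \<and> in_h1 v"
proof (induction m arbitrary: n v)
  case 0
  then show ?case
    by (auto simp: one_s_def wsingle_def in_h1_def split: if_splits)
next
  case (Suc m)
  then obtain i where i: "i \<le> n" "conc (zseries k c i) (spow (zseries k c) m (n - i)) v \<noteq> 0"
    by (auto simp: conc_s_def elim: sum.not_neutral_contains_not_neutral)
  then obtain w1 w2 where w: "zseries k c i w1 \<noteq> 0" "spow (zseries k c) m (n - i) w2 \<noteq> 0" "v = w1 @ w2"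
    by (blast dest: conc_nonzero)
  then have "w1 = zw (i * k)" "c i \<noteq> 0"
    by (auto simp: zseries_def wsingle_def split: if_splits)
  then have "i \<noteq> 0"
    using c0 by metis
  have "length w1 = i * k"
    using k \<open>w1 = zw (i * k)\<close> \<open>i \<noteq> 0\<close> by (simp add: length_zw)
  moreover have "length w2 = (n - i) * k \<and> in_h1 w2"
    using Suc.IH w(2) by blast
  ultimately show ?case
    using i(1) w(3) \<open>w1 = zw (i * k)\<close> by (simp add: add_mult_distrib[symmetric])
qed

lemma finite_wsupp_spow_zseries: "finite (wsupp (spow (zseries k c) m n))"
  by (rule finite_wsupp_of_length[of _ "n * k"]) (simp add: spow_zseries_nonzero)

lemma spow_zseries_eq_0: "n < m \<Longrightarrow> spow (zseries k c) m n = (\<lambda>_. 0)"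
proof (induction m arbitrary: n)
  case (Suc m)
  have "conc (zseries k c i) (spow (zseries k c) m (n - i)) = (\<lambda>_. 0)" if "i \<le> n" for i
    using Suc that by (cases i) simp_all
  then show ?case
    by (auto simp: conc_s_def intro!: ext sum.neutral)
qed simp

lemma spow_zseries_Suc_zw_append:
  assumes "1 \<le> j"
  shows "spow (zseries k c) (Suc m) n (zw j @ v) =
    (if k dvd j \<and> j div k \<le> n then c (j div k) * spow (zseries k c) m (n - j div k) v else 0)"
proof -
  have "spow (zseries k c) (Suc m) n (zw j @ v)
      = (\<Sum>i\<le>n. if i * k = j then c i * spow (zseries k c) m (n - i) v else 0)"
    unfolding spow.simps conc_s_def
    using conc_zseries_zw_append[OF finite_wsupp_spow_zseries assms] by simp
  then show ?thesis
    by (simp only: sum_mult_delta[OF k])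
qed

lemma geom_zseries_eq_sum:
  "n \<le> N \<Longrightarrow> geom (zseries k c) n v = (\<Sum>m\<le>N. spow (zseries k c) m n v)"
  unfolding geom_def by (rule sum.mono_neutral_left) (auto simp: spow_zseries_eq_0)

lemma geom_zseries_nonzero:
  "geom (zseries k c) n v \<noteq> 0 \<Longrightarrow> length v = n * k \<and> in_h1 v"
  unfolding geom_def by (blast elim: sum.not_neutral_contains_not_neutral dest: spow_zseries_nonzero)

lemma h1_series_geom_zseries: "h1_series (geom (zseries k c))"
  unfolding h1_series_def using geom_zseries_nonzero by (metis finite_wsupp_of_length)

lemma geom_zseries_Nil: "geom (zseries k c) n [] = (if n = 0 then 1 else 0)"
proof (cases n)
  case (Suc n')
  then have "geom (zseries k c) n [] = 0"
    using geom_zseries_nonzero[of n "[]"] k by auto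
  then show ?thesis
    using Suc by simp
qed (simp add: geom_def one_s_def wsingle_def)

lemma residual_rule_geom_zseries: "residual_rule k c (geom (zseries k c))"
  unfolding residual_rule_def
proof (intro allI impI)
  fix j n :: nat and v :: word
  assume j: "1 \<le> j"
  have "geom (zseries k c) n (zw j @ v) = (\<Sum>m\<le>Suc n. spow (zseries k c) m n (zw j @ v))"
    by (rule geom_zseries_eq_sum) simp
  also have "\<dots> = (\<Sum>m\<le>n. spow (zseries k c) (Suc m) n (zw j @ v))"
    by (simp add: sum.atMost_Suc_shift one_s_def wsingle_def del: sum.atMost_Suc)
  also have "\<dots> = (if k dvd j \<and> j div k \<le> n
      then c (j div k) * (\<Sum>m\<le>n. spow (zseries k c) m (n - j div k) v) else 0)"
  proof (cases "k dvd j \<and> j div k \<le> n")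
    case True
    then show ?thesis
      by (simp add: spow_zseries_Suc_zw_append[OF j] sum_distrib_left del: spow.simps)
  next
    case False
    then show ?thesis
      by (simp only: spow_zseries_Suc_zw_append[OF j] if_not_P[OF False] if_False sum.neutral_const)
  qed
  also have "\<dots> = (if k dvd j \<and> j div k \<le> n
      then c (j div k) * geom (zseries k c) (n - j div k) v else 0)"
    using geom_zseries_eq_sum[of "n - j div k" n v] by simp
  finally show "geom (zseries k c) n (zw j @ v) = (if k dvd j \<and> j div k \<le> n
      then c (j div k) * geom (zseries k c) (n - j div k) v else 0)" .
qed

end


lemma harm_s_eq_geom_zseries:
  assumes k: "1 \<le> k" and c0: "c 0 = 0"
    and F: "h1_series F" "residual_rule k a F" "\<And>n. F n [] = (if n = 0 then 1 else 0)"
    and G: "h1_series G" "residual_rule k b G" "\<And>n. G n [] = (if n = 0 then 1 else 0)"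
    and abc: "\<And>M. 1 \<le> M \<Longrightarrow> a M + b M + (\<Sum>q\<in>{1..<M}. a q * b (M - q)) = c M"
  shows "harm_s F G = geom (zseries k c)"
proof (rule residual_rule_unique)
  show "harm_s F G n v \<noteq> 0 \<Longrightarrow> in_h1 v" for n v
    using harm_s_outside_h1 by blast
  show "geom (zseries k c) n v \<noteq> 0 \<Longrightarrow> in_h1 v" for n v
    using geom_zseries_nonzero[of k c, OF k c0] by blast
  show "harm_s F G n [] = geom (zseries k c) n []" for n
    using harm_s_Nil[OF F(1) G(1) F(3) G(3)] geom_zseries_Nil[of k c, OF k c0] by simp
  show "residual_rule k c (harm_s F G)"
    using residual_rule_harm_s[OF k F(1,2) G(1,2)] abc by (rule residual_rule_cong)
  show "residual_rule k c (geom (zseries k c))"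
    by (rule residual_rule_geom_zseries[of k c, OF k c0])
qed


section \<open>\<open>S\<^sub>t\<close> on powers of \<open>z\<^sub>k\<close>\<close>

definition zpow :: "nat \<Rightarrow> nat \<Rightarrow> word" where
  "zpow k n = concat (replicate n (zw k))"

lemma zpow_0 [simp]: "zpow k 0 = []"
  by (simp add: zpow_def)

lemma zpow_Suc [simp]: "zpow k (Suc n) = zw k @ zpow k n"
  by (simp add: zpow_def)

lemma in_h1_zpow: "in_h1 (zpow k n)"
  by (induction n) (auto simp: in_h1_def zw_def)

lemma geom_zu: "geom (zu c k) n = wsingle (zpow k n) (c ^ n)"
proof -
  have spow_zu: "spow (zu c k) m n = (if m = n then wsingle (zpow k m) (c ^ m) else (\<lambda>_. 0))" for m n
  proof (induction m arbitrary: n)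
    case 0
    then show ?case by (auto simp: one_s_def)
  next
    case (Suc m)
    have "spow (zu c k) (Suc m) n = (\<lambda>v. \<Sum>i\<le>n. conc (zu c k i) (spow (zu c k) m (n - i)) v)"
      by (simp add: conc_s_def)
    also have "\<dots> = (\<lambda>v. \<Sum>i\<le>n. if i = 1 then conc (wsingle (zw k) c) (spow (zu c k) m (n - 1)) v else 0)"
      by (intro ext sum.cong refl) (simp add: zu_def)
    also have "\<dots> = (\<lambda>v. if 1 \<le> n then conc (wsingle (zw k) c) (spow (zu c k) m (n - 1)) v else 0)"
      by (simp add: sum.delta)
    also have "\<dots> = (if Suc m = n then wsingle (zpow k (Suc m)) (c ^ Suc m) else (\<lambda>_. 0))"
      by (cases n) (auto simp: Suc.IH conc_wsingle_wsingle)
    finally show ?case .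
  qed
  show ?thesis
  proof
    fix v
    have "geom (zu c k) n v = (\<Sum>m\<le>n. if m = n then wsingle (zpow k n) (c ^ n) v else 0)"
      unfolding geom_def spow_zu by (intro sum.cong) auto
    then show "geom (zu c k) n v = wsingle (zpow k n) (c ^ n) v"
      by simp
  qed
qed

lemma S_t_wsingle: "S_t (wsingle w 1) = S_w w"
proof -
  have "{w'. wsingle w 1 w' \<noteq> 0} = {w}"
    by (auto simp: wsingle_def)
  then show ?thesis
    by (simp add: S_t_def lin_def wsingle_def)
qed

lemma pre_nonzero: "pre a F v \<noteq> 0 \<Longrightarrow> \<exists>v'. v = a # v' \<and> F v' \<noteq> 0"
  by (cases v) (auto simp: pre_def split: if_splits)

lemma length_sigma_w: "sigma_w w v \<noteq> 0 \<Longrightarrow> length v = length w"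
proof (induction w arbitrary: v rule: sigma_w.induct)
  case 1
  then show ?case by (auto simp: wsingle_def split: if_splits)
next
  case (2 w)
  then show ?case by (auto dest!: pre_nonzero)
next
  case (3 w)
  then have "pre Lx (sigma_w w) v \<noteq> 0 \<or> pre Ly (sigma_w w) v \<noteq> 0"
    by auto
  then show ?case
    using 3 by (auto dest!: pre_nonzero)
qed

lemma S_w_nonzero:
  assumes "S_w w v \<noteq> 0"
  shows "length v = length w" "w \<noteq> [] \<Longrightarrow> last v = last w"
proof -
  show "length v = length w"
  proof (cases "w = []")
    case False
    with assms have "v \<noteq> []" "sigma_w (butlast w) (butlast v) \<noteq> 0"
      by (auto simp: S_w_def post_def split: if_splits)
    then have "length (butlast v) = length (butlast w)"
      using length_sigma_w by blast
    then show ?thesis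
      using False \<open>v \<noteq> []\<close> by (cases v rule: rev_cases; cases w rule: rev_cases) auto
  qed (use assms in \<open>auto simp: S_w_def wsingle_def split: if_splits\<close>)
  show "w \<noteq> [] \<Longrightarrow> last v = last w"
    using assms by (auto simp: S_w_def post_def split: if_splits)
qed

lemma post_pre: "post b (pre a F) = pre a (post b F)"
proof
  fix v
  show "post b (pre a F) v = pre a (post b F) v"
    by (cases v; cases "tl v") (auto simp: post_def pre_def)
qed

lemma S_w_Lx_Cons: "w \<noteq> [] \<Longrightarrow> S_w (Lx # w) = pre Lx (S_w w)"
  by (simp add: S_w_def post_pre)

lemma S_w_Ly_Cons:
  assumes "w \<noteq> []"
  shows "S_w (Ly # w) = (\<lambda>v. tvar * pre Lx (S_w w) v + pre Ly (S_w w) v)"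
proof -
  have "S_w (Ly # w) = post (last w) (\<lambda>v. tvar * pre Lx (sigma_w (butlast w)) v + pre Ly (sigma_w (butlast w)) v)"
    using assms by (simp add: S_w_def)
  also have "\<dots> = (\<lambda>v. tvar * post (last w) (pre Lx (sigma_w (butlast w))) v
                        + post (last w) (pre Ly (sigma_w (butlast w))) v)"
    by (auto simp: post_def)
  finally show ?thesis
    using assms by (simp add: post_pre S_w_def)
qed

lemma S_w_zw_append:
  assumes "1 \<le> k" "1 \<le> j"
  shows "S_w (zw k @ w) (zw j @ v) =
    (if j = k then S_w w v else 0) + (if k < j then tvar * S_w w (zw (j - k) @ v) else 0)"
proof -
  have S_w_replicate: "S_w (replicate m Lx @ u) = (pre Lx ^^ m) (S_w u)" if "u \<noteq> []" for m u
    using that by (induction m) (simp_all add: S_w_Lx_Cons)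
  have pre_power: "(pre Lx ^^ m) G (replicate p Lx @ Ly # v)
      = (if m \<le> p then G (replicate (p - m) Lx @ Ly # v) else 0)" for m p G
  proof (induction m arbitrary: p)
    case (Suc m)
    then show ?case by (cases p) (simp_all add: pre_def)
  qed simp
  have "k - 1 \<le> j - 1 \<longleftrightarrow> k \<le> j" "j - 1 - (k - 1) = j - k"
    using assms by auto
  then have "S_w (zw k @ w) (zw j @ v) = (if k \<le> j then S_w (Ly # w) (replicate (j - k) Lx @ Ly # v) else 0)"
    by (simp add: zw_def S_w_replicate pre_power)
  also have "\<dots> = (if j = k then S_w w v else 0) + (if k < j then tvar * S_w w (zw (j - k) @ v) else 0)"
  proof (cases "w = []")
    case True
    have "S_w [Ly] u = wsingle [Ly] 1 u" for u
      by (cases u) (auto simp: S_w_def post_def wsingle_def)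
    then show ?thesis
      using True by (cases "j - k") (auto simp: wsingle_def zw_def S_w_def)
  next
    case False
    then show ?thesis
      by (cases "j - k") (auto simp: S_w_Ly_Cons pre_def zw_def)
  qed
  finally show ?thesis .
qed

lemma h1_series_S_w_zpow: "h1_series (\<lambda>n. S_w (zpow k n))"
proof -
  have "in_h1 v" if "S_w (zpow k n) v \<noteq> 0" for n v
    using S_w_nonzero[OF that] in_h1_zpow[of k n] by (cases "zpow k n = []") (auto simp: in_h1_def)
  moreover have "finite (wsupp (S_w (zpow k n)))" for n
    using S_w_nonzero(1) by (rule finite_wsupp_of_length)
  ultimately show ?thesis
    by (simp add: h1_series_def)
qed

lemma S_w_zpow_Nil: "S_w (zpow k n) [] = (if n = 0 then 1 else 0)"
  using S_w_nonzero(1)[of "zpow k n" "[]"] by (cases n) (auto simp: S_w_def wsingle_def)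

lemma residual_rule_S_w_zpow:
  assumes k: "1 \<le> k"
  shows "residual_rule k (\<lambda>M. tvar ^ (M - 1)) (\<lambda>n. S_w (zpow k n))"
  unfolding residual_rule_def
proof (intro allI impI)
  fix j n :: nat and v :: word
  assume "1 \<le> j"
  then show "S_w (zpow k n) (zw j @ v) = (if k dvd j \<and> j div k \<le> n
      then tvar ^ (j div k - 1) * S_w (zpow k (n - j div k)) v else 0)"
  proof (induction n arbitrary: j)
    case 0
    have "k dvd j \<Longrightarrow> 0 < j div k"
      using "0.prems" k by (auto elim!: dvdE)
    then show ?case
      by (auto simp: S_w_def wsingle_def)
  next
    case (Suc m)
    consider "j < k" | "j = k" | "k < j"
      by linarith
    then show ?case
    proof cases
      case 1
      then have "\<not> k dvd j"
        using Suc.prems by (auto dest: dvd_imp_le)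
      then show ?thesis
        using 1 k Suc.prems by (simp add: S_w_zw_append)
    next
      case 2
      then show ?thesis
        using k by (simp add: S_w_zw_append)
    next
      case 3
      then obtain i where "j = i + k" "1 \<le> i"
        by (intro that[of "j - k"]) auto
      then have "S_w (zpow k (Suc m)) (zw j @ v) = tvar * (if k dvd i \<and> i div k \<le> m
          then tvar ^ (i div k - 1) * S_w (zpow k (m - i div k)) v else 0)"
        using k Suc.prems Suc.IH[of i] by (simp add: S_w_zw_append)
      moreover have "j div k = Suc (i div k)" "k dvd j \<longleftrightarrow> k dvd i"
        using \<open>j = i + k\<close> k by simp_all
      moreover have "k dvd i \<Longrightarrow> i div k = Suc (i div k - 1)"
        using \<open>1 \<le> i\<close> k by (auto elim!: dvdE)
      ultimately show ?thesis
        by (cases "k dvd i") (auto simp del: Suc_diff_1 simp: power_Suc[symmetric])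
    qed
  qed
qed

lemma harm_coefficient:
  assumes "1 \<le> M"
  shows "tvar ^ (M - 1) + (if M = 1 then -1 else 0)
      + (\<Sum>q\<in>{1..<M}. tvar ^ (q - 1) * (if M - q = 1 then -1 else 0))
    = (if 2 \<le> M then tvar ^ (M - 2) * (tvar - 1) else 0)"
proof (cases "M = 1")
  case False
  then obtain N where M: "M = N + 2"
    using assms by (intro that[of "M - 2"]) simp
  have "(\<Sum>q\<in>{1..<M}. tvar ^ (q - 1) * (if M - q = 1 then -1 else 0))
      = (\<Sum>q\<in>{1..<M}. if q = N + 1 then - (tvar ^ N) else 0)"
    by (intro sum.cong) (auto simp: M)
  also have "\<dots> = - (tvar ^ N)"
    by (simp add: M)
  finally show ?thesis
    by (simp add: M algebra_simps)
qed simp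

theorem proposition4p8:
  fixes k :: nat
  assumes "k \<ge> 1"
  shows "harm_s (S_ts (geom (zu 1 k))) (geom (zu (-1) k)) = geom (Xrhs k)"
proof -
  define b :: "nat \<Rightarrow> rat poly" where "b = (\<lambda>i. if i = 1 then -1 else 0)"
  define c :: "nat \<Rightarrow> rat poly" where "c = (\<lambda>i. if 2 \<le> i then tvar ^ (i - 2) * (tvar - 1) else 0)"
  have b0: "b 0 = 0" and c0: "c 0 = 0"
    by (simp_all add: b_def c_def)
  have "harm_s (\<lambda>n. S_w (zpow k n)) (geom (zseries k b)) = geom (zseries k c)"
    by (rule harm_s_eq_geom_zseries[where c = c and F = "\<lambda>n. S_w (zpow k n)" and G = "geom (zseries k b)",
          OF assms c0 h1_series_S_w_zpow
          residual_rule_S_w_zpow[OF assms] S_w_zpow_Nil[of k]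
          h1_series_geom_zseries[of k b, OF assms b0] residual_rule_geom_zseries[of k b, OF assms b0]
          geom_zseries_Nil[of k b, OF assms b0]])
      (unfold b_def c_def, rule harm_coefficient)
  moreover have "S_ts (geom (zu 1 k)) = (\<lambda>n. S_w (zpow k n))"
    by (simp add: S_ts_def geom_zu S_t_wsingle)
  ultimately show ?thesis
    by (simp add: b_def c_def zu_eq_zseries Xrhs_eq_zseries)
qed

end
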